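(* For every positive integer $t$ there exist constants $\alpha,\beta,\gamma>0$ such that the following holds. Let $s$ be a positive integer and $n\geq 2$ an integer, and let $G$ be a quasi-comparability graph of complexity $t$ on $n$ vertices that contains no clique of size $s$. Then $$\chi(G)\leq \alpha s^{\beta}(\log n)^{\gamma}.$$
   Context: For $\mathbf{x},\mathbf{y}\in\mathbb{R}^t$ write $\mathbf{x}\prec\mathbf{y}$ if $\mathbf{x}(i)<\mathbf{y}(i)$ for every $i\in[t]$. A quasi-comparability graph of complexity $t$ is a finite simple graph $G$ with $V(G)\subset\mathbb{R}^t\times\mathbb{R}^t$ in which distinct vertices $(\mathbf{x},\mathbf{y})$ and $(\mathbf{x}',\mathbf{y}')$ are adjacent iff $\mathbf{x}\prec\mathbf{y}'$ or $\mathbf{x}'\prec\mathbf{y}$. $\chi(G)$ is the chromatic number. *)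

theory Defs
  imports "HOL-Analysis.Analysis"
begin

text \<open>Strict coordinatewise order on R^t (index type 't, t = CARD('t)).\<close>
definition vprec :: "real^'t \<Rightarrow> real^'t \<Rightarrow> bool" where
  "vprec x y \<longleftrightarrow> (\<forall>i. x $ i < y $ i)"

definition qc_adj :: "((real^'t) \<times> (real^'t)) \<Rightarrow> ((real^'t) \<times> (real^'t)) \<Rightarrow> bool" where
  "qc_adj u v \<longleftrightarrow> u \<noteq> v \<and> (vprec (fst u) (snd v) \<or> vprec (fst v) (snd u))"

definition is_clique :: "('a \<Rightarrow> 'a \<Rightarrow> bool) \<Rightarrow> 'a set \<Rightarrow> bool" where
  "is_clique E K \<longleftrightarrow> (\<forall>u\<in>K. \<forall>v\<in>K. u \<noteq> v \<longrightarrow> E u v)"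

definition proper_colouring :: "('a \<Rightarrow> 'a \<Rightarrow> bool) \<Rightarrow> 'a set \<Rightarrow> ('a \<Rightarrow> nat) \<Rightarrow> nat \<Rightarrow> bool" where
  "proper_colouring E V c k \<longleftrightarrow>
     (\<forall>v\<in>V. c v < k) \<and> (\<forall>u\<in>V. \<forall>v\<in>V. E u v \<longrightarrow> c u \<noteq> c v)"

definition chromatic_number :: "('a \<Rightarrow> 'a \<Rightarrow> bool) \<Rightarrow> 'a set \<Rightarrow> nat" where
  "chromatic_number E V = (LEAST k. \<exists>c. proper_colouring E V c k)"

end

theory Submission
  imports Defs
begin

text \<open>
  A vertex is a box: coordinate \<open>i\<close> contributes the pair \<open>(x i, y i)\<close>, and \<open>u\<close> points to \<open>v\<close>
  when \<open>x\<^sub>u i < y\<^sub>v i\<close> for every \<open>i\<close>. The coordinates are eliminated one at a time, keeping an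
  auxiliary relation \<open>P\<close> that is either full or a strict order. For the current coordinate
  \<open>(a, b)\<close>, on the vertices with \<open>b u \<le> a u\<close> the constraint \<open>a u < b v\<close> is itself a strict
  order and is absorbed into \<open>P\<close>. The remaining vertices carry nonempty intervals
  \<open>[a u, b u)\<close>; an edge either joins overlapping intervals, or satisfies \<open>b u \<le> a v\<close>, again a
  strict order absorbed into \<open>P\<close>. The two kinds of edges are coloured separately and the
  colourings multiplied. For overlapping intervals, split at a median point: the intervals
  containing it pairwise overlap, so the first coordinate imposes nothing on them, and the
  intervals entirely to its left or right do not interact; recursing costs a factor
  \<open>log n\<close>. Once all coordinates are gone, the graph is complete or the comparability
  graph of a strict order, and has chromatic number below \<open>s\<close> (Mirsky). The recursion
  \<open>K \<mapsto> K + K \<cdot> log n \<cdot> K\<close> yields a bound polynomial in \<open>s\<close> and \<open>log n\<close>.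
\<close>

definition colourable :: "('a \<Rightarrow> 'a \<Rightarrow> bool) \<Rightarrow> 'a set \<Rightarrow> nat \<Rightarrow> bool" where
  "colourable E V k \<longleftrightarrow> (\<exists>c. proper_colouring E V c k)"

definition clique_free :: "('a \<Rightarrow> 'a \<Rightarrow> bool) \<Rightarrow> 'a set \<Rightarrow> nat \<Rightarrow> bool" where
  "clique_free E V s \<longleftrightarrow> \<not> (\<exists>K\<subseteq>V. card K = s \<and> is_clique E K)"

lemma colourable_subgraph:
  assumes "colourable E V k" "W \<subseteq> V" "\<And>u v. u \<in> W \<Longrightarrow> v \<in> W \<Longrightarrow> E' u v \<Longrightarrow> E u v"
  shows "colourable E' W k"
  using assms unfolding colourable_def proper_colouring_def by blast

lemma colourable_empty: "colourable E {} 0"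
  unfolding colourable_def proper_colouring_def by simp

lemma colourable_Un:
  assumes "colourable E V k" "colourable E W l"
  shows "colourable E (V \<union> W) (k + l)"
proof -
  obtain c d where c: "proper_colouring E V c k" and d: "proper_colouring E W d l"
    using assms unfolding colourable_def by blast
  have "proper_colouring E (V \<union> W) (\<lambda>v. if v \<in> V then c v else k + d v) (k + l)"
    using c d unfolding proper_colouring_def by (auto split: if_splits)
  then show ?thesis unfolding colourable_def by blast
qed

lemma colourable_Un_nonadjacent:
  assumes "colourable E V k" "colourable E W k"
    and "\<And>u v. u \<in> V \<Longrightarrow> v \<in> W \<Longrightarrow> \<not> E u v \<and> \<not> E v u"
  shows "colourable E (V \<union> W) k"
proof -
  obtain c d where c: "proper_colouring E V c k" and d: "proper_colouring E W d k"
    using assms unfolding colourable_def by blast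
  have "proper_colouring E (V \<union> W) (\<lambda>v. if v \<in> V then c v else d v) k"
    using c d assms(3) unfolding proper_colouring_def by (auto split: if_splits)
  then show ?thesis unfolding colourable_def by blast
qed

lemma colourable_edge_Un:
  assumes "colourable E\<^sub>1 V k\<^sub>1" "colourable E\<^sub>2 V k\<^sub>2"
    and "\<And>u v. u \<in> V \<Longrightarrow> v \<in> V \<Longrightarrow> E u v \<Longrightarrow> E\<^sub>1 u v \<or> E\<^sub>2 u v"
  shows "colourable E V (k\<^sub>1 * k\<^sub>2)"
proof -
  obtain c\<^sub>1 c\<^sub>2 where c\<^sub>1: "proper_colouring E\<^sub>1 V c\<^sub>1 k\<^sub>1" and c\<^sub>2: "proper_colouring E\<^sub>2 V c\<^sub>2 k\<^sub>2"
    using assms unfolding colourable_def by blast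
  define c where "c v = c\<^sub>1 v * k\<^sub>2 + c\<^sub>2 v" for v
  have c_div: "c v div k\<^sub>2 = c\<^sub>1 v" and c_mod: "c v mod k\<^sub>2 = c\<^sub>2 v" if "v \<in> V" for v
    using c\<^sub>2 that unfolding c_def proper_colouring_def by auto
  have "c v < k\<^sub>1 * k\<^sub>2" if "v \<in> V" for v
  proof -
    have "c\<^sub>1 v < k\<^sub>1" "c\<^sub>2 v < k\<^sub>2" using c\<^sub>1 c\<^sub>2 that unfolding proper_colouring_def by auto
    then have "c\<^sub>1 v * k\<^sub>2 + c\<^sub>2 v < (c\<^sub>1 v + 1) * k\<^sub>2" by simp
    also have "\<dots> \<le> k\<^sub>1 * k\<^sub>2" using \<open>c\<^sub>1 v < k\<^sub>1\<close> by (intro mult_right_mono) auto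
    finally show ?thesis unfolding c_def .
  qed
  moreover have "c u \<noteq> c v" if "u \<in> V" "v \<in> V" "E u v" for u v
    using c\<^sub>1 c\<^sub>2 assms(3)[OF that] that c_div c_mod unfolding proper_colouring_def by metis
  ultimately show ?thesis unfolding colourable_def proper_colouring_def by blast
qed

lemma clique_free_subgraph:
  assumes "clique_free E V s" "W \<subseteq> V" "\<And>u v. u \<in> W \<Longrightarrow> v \<in> W \<Longrightarrow> E' u v \<Longrightarrow> E u v"
  shows "clique_free E' W s"
proof -
  have "is_clique E K" if "K \<subseteq> W" "is_clique E' K" for K
    using that assms(3) unfolding is_clique_def by blast
  then show ?thesis using assms(1,2) unfolding clique_free_def by blast
qed

lemma card_clique_less:
  assumes "clique_free E V s" "C \<subseteq> V" "is_clique E C"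
  shows "card C < s"
proof (rule ccontr)
  assume "\<not> card C < s"
  then obtain K where "K \<subseteq> C" "card K = s" by (meson not_less obtain_subset_with_card_n)
  with assms show False unfolding clique_free_def is_clique_def by blast
qed

lemma colourable_card:
  assumes "finite V" "irreflp_on V E" "card V \<le> k"
  shows "colourable E V k"
proof -
  obtain f where f: "bij_betw f V {..<card V}"
    using assms(1) by (metis ex_bij_betw_finite_nat atLeast0LessThan)
  have "f v < k" if "v \<in> V" for v
    using f that assms(3) unfolding bij_betw_def by (metis imageI lessThan_iff order_less_le_trans)
  moreover have "f u \<noteq> f v" if "u \<in> V" "v \<in> V" "E u v" for u v
    using f that assms(2) unfolding bij_betw_def inj_on_def irreflp_on_def by metis
  ultimately show ?thesis unfolding colourable_def proper_colouring_def by blast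
qed

definition comparability :: "('a \<Rightarrow> 'a \<Rightarrow> bool) \<Rightarrow> 'a \<Rightarrow> 'a \<Rightarrow> bool" where
  "comparability R u v \<longleftrightarrow> u \<noteq> v \<and> (R u v \<or> R v u)"

lemma irreflp_on_comparability: "irreflp_on V (comparability R)"
  unfolding irreflp_on_def comparability_def by simp

lemma colourable_strict_order:
  assumes fin: "finite V" and irrefl: "irreflp_on V P" and trans: "transp_on V P"
    and free: "clique_free (comparability P) V s"
  shows "colourable (comparability P) V s"
proof -
  define chains where "chains v =
    {C. C \<subseteq> V \<and> is_clique (comparability P) C \<and> v \<in> C \<and> (\<forall>w\<in>C - {v}. P w v)}" for v
  define height where "height v = Max (card ` chains v)" for v
  have fin_chains: "finite (chains v)" for v
    using fin by (rule rev_finite_subset[OF finite_Pow_iff[THEN iffD2]]) (auto simp: chains_def)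
  have nonempty: "card ` chains v \<noteq> {}" if "v \<in> V" for v
    using that unfolding chains_def is_clique_def by blast
  have "height v < s" if "v \<in> V" for v
    unfolding height_def using fin_chains nonempty[OF that]
    by (subst Max_less_iff) (auto simp: chains_def intro: card_clique_less[OF free])
  moreover have "height u < height v" if uv: "u \<in> V" "v \<in> V" "P u v" for u v
  proof -
    obtain C where C: "C \<in> chains u" "card C = height u"
      using Max_in[OF _ nonempty[OF uv(1)]] fin_chains unfolding height_def by fastforce
    then have CV: "C \<subseteq> V" unfolding chains_def by auto
    have below_v: "P w v" if "w \<in> C" for w
    proof (cases "w = u")
      case False
      then have "P w u" using C(1) that unfolding chains_def by blast
      then show ?thesis using transp_onD[OF trans] uv CV that by blast
    qed (use uv in simp)
    then have "v \<notin> C" using irrefl uv(2) unfolding irreflp_on_def by blast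
    have "is_clique (comparability P) C" using C(1) unfolding chains_def by blast
    then have "is_clique (comparability P) (insert v C)"
      using below_v unfolding is_clique_def comparability_def by blast
    then have "insert v C \<in> chains v" using CV uv(2) below_v unfolding chains_def by blast
    then have "card (insert v C) \<le> height v" unfolding height_def using fin_chains by simp
    moreover have "finite C" using CV fin by (rule finite_subset)
    ultimately show ?thesis using C(2) \<open>v \<notin> C\<close> by simp
  qed
  moreover have "height u \<noteq> height v" if "u \<in> V" "v \<in> V" "comparability P u v" for u v
    using that calculation(2)[of u v] calculation(2)[of v u] unfolding comparability_def by force
  ultimately show ?thesis unfolding colourable_def proper_colouring_def by blast
qed

definition full_or_strict_order_on :: "'a set \<Rightarrow> ('a \<Rightarrow> 'a \<Rightarrow> bool) \<Rightarrow> bool" where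
  "full_or_strict_order_on V P \<longleftrightarrow>
     (\<forall>u\<in>V. \<forall>v\<in>V. P u v) \<or> irreflp_on V P \<and> transp_on V P"

lemma full_or_strict_order_on_subset:
  "full_or_strict_order_on V P \<Longrightarrow> W \<subseteq> V \<Longrightarrow> full_or_strict_order_on W P"
  unfolding full_or_strict_order_on_def irreflp_on_def transp_on_def by blast

lemma full_or_strict_order_on_conj:
  assumes "full_or_strict_order_on V P" "irreflp_on V Q" "transp_on V Q"
  shows "full_or_strict_order_on V (\<lambda>u v. P u v \<and> Q u v)"
  using assms unfolding full_or_strict_order_on_def irreflp_on_def transp_on_def by blast

lemma colourable_full_or_strict_order:
  assumes "finite V" "full_or_strict_order_on V P" "clique_free (comparability P) V s"
  shows "colourable (comparability P) V s"
proof (cases "\<forall>u\<in>V. \<forall>v\<in>V. P u v")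
  case True
  then have "is_clique (comparability P) V" unfolding is_clique_def comparability_def by blast
  then have "card V < s" using card_clique_less[OF assms(3)] by blast
  then show ?thesis using colourable_card[OF assms(1) irreflp_on_comparability] by simp
next
  case False
  then show ?thesis
    using assms colourable_strict_order unfolding full_or_strict_order_on_def by blast
qed

lemma exists_median:
  fixes f :: "'a \<Rightarrow> real"
  assumes fin: "finite V"
  shows "\<exists>m. 2 * card {u\<in>V. f u < m} \<le> card V \<and> 2 * card {u\<in>V. m < f u} \<le> card V"
proof (cases "V = {}")
  case False
  define S where "S = {r \<in> f ` V. card V \<le> 2 * card {u\<in>V. f u \<le> r}}"
  define m where "m = Min S"
  have "{u\<in>V. f u \<le> Max (f ` V)} = V" using fin by auto
  then have "Max (f ` V) \<in> S" using fin False unfolding S_def by simp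
  then have "finite S" "S \<noteq> {}" using fin unfolding S_def by auto
  then have "m \<in> S" and m_min: "\<And>r. r \<in> S \<Longrightarrow> m \<le> r" unfolding m_def by auto
  have "{u\<in>V. m < f u} = V - {u\<in>V. f u \<le> m}" by auto
  moreover have "card {u\<in>V. f u \<le> m} \<le> card V" using fin by (intro card_mono) auto
  ultimately have upper: "2 * card {u\<in>V. m < f u} \<le> card V"
    using \<open>m \<in> S\<close> fin by (simp add: S_def card_Diff_subset) linarith
  define A where "A = {u\<in>V. f u < m}"
  have "2 * card A \<le> card V"
  proof (rule ccontr)
    assume big: "\<not> 2 * card A \<le> card V"
    then have "A \<noteq> {}" by (cases "A = {}") auto
    moreover have "finite A" using fin unfolding A_def by auto
    ultimately have "Max (f ` A) \<in> f ` A" by simp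
    then have "Max (f ` A) < m" "Max (f ` A) \<in> f ` V" unfolding A_def by auto
    moreover have "A \<subseteq> {u\<in>V. f u \<le> Max (f ` A)}"
      using \<open>finite A\<close> unfolding A_def by auto
    then have "card A \<le> card {u\<in>V. f u \<le> Max (f ` A)}" using fin by (simp add: card_mono)
    ultimately have "Max (f ` A) \<in> S" using big unfolding S_def by simp
    with m_min \<open>Max (f ` A) < m\<close> show False by fastforce
  qed
  with upper show ?thesis unfolding A_def by blast
qed simp

lemma colourable_interval_overlap:
  fixes a b :: "'a \<Rightarrow> real"
  assumes "finite V" "card V < 2 ^ d"
    and "\<And>u. u \<in> V \<Longrightarrow> a u < b u"
    and "\<And>u v. u \<in> V \<Longrightarrow> v \<in> V \<Longrightarrow> E u v \<Longrightarrow> a u < b v \<and> a v < b u"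
    and "\<And>W m. W \<subseteq> V \<Longrightarrow> (\<And>u. u \<in> W \<Longrightarrow> a u \<le> m \<and> m < b u) \<Longrightarrow> colourable E W k"
  shows "colourable E V (d * k)"
  using assms
proof (induction d arbitrary: V)
  case 0
  then show ?case using colourable_empty by simp
next
  case (Suc d)
  obtain m where m: "2 * card {u\<in>V. a u < m} \<le> card V" "2 * card {u\<in>V. m < a u} \<le> card V"
    using exists_median[OF Suc.prems(1)] by blast
  define L where "L = {u\<in>V. b u \<le> m}"
  define R where "R = {u\<in>V. m < a u}"
  define M where "M = {u\<in>V. a u \<le> m \<and> m < b u}"
  have V_split: "V = M \<union> (L \<union> R)" and "L \<subseteq> V" "R \<subseteq> V"
    unfolding L_def R_def M_def by auto
  have "L \<subseteq> {u\<in>V. a u < m}" using Suc.prems(3) unfolding L_def by (blast intro: less_le_trans)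
  then have "card L \<le> card {u\<in>V. a u < m}" using Suc.prems(1) by (simp add: card_mono)
  moreover have "card V < 2 * 2 ^ d" using Suc.prems(2) by simp
  ultimately have "card L < 2 ^ d" "card R < 2 ^ d" using m unfolding R_def by linarith+
  have half: "colourable E X (d * k)" if "X \<subseteq> V" "card X < 2 ^ d" for X
  proof (rule Suc.IH)
    show "finite X" using that(1) Suc.prems(1) by (rule finite_subset)
    show "colourable E W k" if "W \<subseteq> X" "\<And>u. u \<in> W \<Longrightarrow> a u \<le> m \<and> m < b u" for W m
      by (rule Suc.prems(5)) (use that \<open>X \<subseteq> V\<close> in auto)
    show "a u < b v \<and> a v < b u" if "u \<in> X" "v \<in> X" "E u v" for u v
      using Suc.prems(4) that \<open>X \<subseteq> V\<close> by blast
  qed (use that Suc.prems in auto)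
  have "colourable E M k" by (rule Suc.prems(5)) (auto simp: M_def)
  moreover have "colourable E (L \<union> R) (d * k)"
  proof (rule colourable_Un_nonadjacent)
    show "colourable E L (d * k)" "colourable E R (d * k)"
      using half \<open>L \<subseteq> V\<close> \<open>R \<subseteq> V\<close> \<open>card L < 2 ^ d\<close> \<open>card R < 2 ^ d\<close> by auto
    show "\<not> E u v \<and> \<not> E v u" if "u \<in> L" "v \<in> R" for u v
    proof -
      have "b u \<le> m" "m < a v" "u \<in> V" "v \<in> V" using that unfolding L_def R_def by auto
      then show ?thesis using Suc.prems(4)[of u v] Suc.prems(4)[of v u] by auto
    qed
  qed
  ultimately have "colourable E (M \<union> (L \<union> R)) (k + d * k)" by (rule colourable_Un)
  then show ?case using V_split by simp
qed

definition coord_prec ::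
    "('a \<Rightarrow> 'a \<Rightarrow> bool) \<Rightarrow> (('a \<Rightarrow> real) \<times> ('a \<Rightarrow> real)) list \<Rightarrow> 'a \<Rightarrow> 'a \<Rightarrow> bool" where
  "coord_prec P fs u v \<longleftrightarrow> P u v \<and> (\<forall>(a, b) \<in> set fs. a u < b v)"

lemma coord_prec_Nil: "coord_prec P [] = P"
  by (simp add: coord_prec_def fun_eq_iff)

lemma coord_prec_Cons: "coord_prec P ((a, b) # fs) = coord_prec (\<lambda>u v. P u v \<and> a u < b v) fs"
  by (auto simp: coord_prec_def fun_eq_iff)

context
  fixes V :: "'a set" and P :: "'a \<Rightarrow> 'a \<Rightarrow> bool" and a b :: "'a \<Rightarrow> real"
    and fs :: "(('a \<Rightarrow> real) \<times> ('a \<Rightarrow> real)) list" and s K :: nat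
  assumes tail_colourable: "\<And>W Q. W \<subseteq> V \<Longrightarrow> full_or_strict_order_on W Q \<Longrightarrow>
      clique_free (comparability (coord_prec Q fs)) W s \<Longrightarrow>
      colourable (comparability (coord_prec Q fs)) W K"
    and order: "full_or_strict_order_on V P"
    and free: "clique_free (comparability (coord_prec P ((a, b) # fs))) V s"
begin

lemma colourable_reversed_part:
  "colourable (comparability (coord_prec P ((a, b) # fs))) {u\<in>V. b u \<le> a u} K"
proof -
  let ?B = "{u\<in>V. b u \<le> a u}" and ?Q = "\<lambda>u v. P u v \<and> a u < b v"
  have "full_or_strict_order_on ?B ?Q"
  proof (rule full_or_strict_order_on_conj)
    show "full_or_strict_order_on ?B P" using order by (rule full_or_strict_order_on_subset) auto
    show "irreflp_on ?B (\<lambda>u v. a u < b v)" by (auto simp: irreflp_on_def)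
    show "transp_on ?B (\<lambda>u v. a u < b v)" by (auto simp: transp_on_def)
  qed
  moreover have "clique_free (comparability (coord_prec ?Q fs)) ?B s"
    using free by (rule clique_free_subgraph) (auto simp: coord_prec_Cons)
  ultimately show ?thesis using tail_colourable[of ?B ?Q] by (simp add: coord_prec_Cons)
qed

lemma colourable_interval_part:
  assumes "finite V" "card V < 2 ^ d"
  shows "colourable (comparability (coord_prec P ((a, b) # fs))) {u\<in>V. a u < b u} (d * K * K)"
proof -
  let ?F = "{u\<in>V. a u < b u}" and ?Q = "\<lambda>u v. P u v \<and> b u \<le> a v"
  define overlap where "overlap u v \<longleftrightarrow> comparability (coord_prec P fs) u v \<and> a u < b v \<and> a v < b u"
    for u v
  have "colourable overlap ?F (d * K)"
  proof (rule colourable_interval_overlap)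
    show "finite ?F" using assms(1) by simp
    show "card ?F < 2 ^ d" using assms card_mono[of V ?F] by fastforce
    show "colourable overlap W K" if W: "W \<subseteq> ?F" "\<And>u. u \<in> W \<Longrightarrow> a u \<le> m \<and> m < b u" for W m
    proof -
      have common: "a u < b v" if "u \<in> W" "v \<in> W" for u v
        using W(2)[OF that(1)] W(2)[OF that(2)] by linarith
      have "full_or_strict_order_on W P"
        using order by (rule full_or_strict_order_on_subset) (use W in auto)
      moreover have "clique_free (comparability (coord_prec P fs)) W s"
        using free by (rule clique_free_subgraph)
          (use W common in \<open>auto simp: comparability_def coord_prec_def\<close>)
      ultimately have "colourable (comparability (coord_prec P fs)) W K" using tail_colourable W(1) by blast
      then show ?thesis by (rule colourable_subgraph) (auto simp: overlap_def)
    qed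
  qed (auto simp: overlap_def)
  moreover have "colourable (comparability (coord_prec ?Q fs)) ?F K"
  proof (rule tail_colourable)
    show "full_or_strict_order_on ?F ?Q"
    proof (rule full_or_strict_order_on_conj)
      show "full_or_strict_order_on ?F P" using order by (rule full_or_strict_order_on_subset) auto
      show "irreflp_on ?F (\<lambda>u v. b u \<le> a v)" by (auto simp: irreflp_on_def)
      show "transp_on ?F (\<lambda>u v. b u \<le> a v)" by (auto simp: transp_on_def)
    qed
    show "clique_free (comparability (coord_prec ?Q fs)) ?F s"
      using free by (rule clique_free_subgraph)
        (auto simp: comparability_def coord_prec_def intro: less_le_trans le_less_trans)
  qed auto
  moreover have "overlap u v \<or> comparability (coord_prec ?Q fs) u v"
    if "u \<in> ?F" "v \<in> ?F" "comparability (coord_prec P ((a, b) # fs)) u v" for u v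
    using that unfolding overlap_def comparability_def coord_prec_def by auto
  ultimately show ?thesis by (rule colourable_edge_Un)
qed

lemma colourable_coord_prec_Cons:
  assumes "finite V" "card V < 2 ^ d"
  shows "colourable (comparability (coord_prec P ((a, b) # fs))) V (K + d * K * K)"
proof -
  have "V = {u\<in>V. b u \<le> a u} \<union> {u\<in>V. a u < b u}" by auto
  then show ?thesis
    using colourable_Un[OF colourable_reversed_part colourable_interval_part[OF assms]] by simp
qed

end

fun colour_bound :: "nat \<Rightarrow> nat \<Rightarrow> nat \<Rightarrow> nat" where
  "colour_bound 0 s d = s"
| "colour_bound (Suc k) s d = (let K = colour_bound k s d in K + d * K * K)"

lemma colourable_coord_prec:
  assumes "finite V" "card V < 2 ^ d" "full_or_strict_order_on V P"
    and "clique_free (comparability (coord_prec P fs)) V s"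
  shows "colourable (comparability (coord_prec P fs)) V (colour_bound (length fs) s d)"
  using assms
proof (induction fs arbitrary: P V)
  case Nil
  then show ?case using colourable_full_or_strict_order by (simp add: coord_prec_Nil)
next
  case (Cons ab fs)
  obtain a b where ab: "ab = (a, b)" by fastforce
  have "colourable (comparability (coord_prec P ((a, b) # fs))) V
      (colour_bound (length fs) s d + d * colour_bound (length fs) s d * colour_bound (length fs) s d)"
  proof (rule colourable_coord_prec_Cons)
    show "colourable (comparability (coord_prec Q fs)) W (colour_bound (length fs) s d)"
      if "W \<subseteq> V" "full_or_strict_order_on W Q" "clique_free (comparability (coord_prec Q fs)) W s"
      for W Q
    proof (rule Cons.IH)
      show "finite W" using \<open>W \<subseteq> V\<close> Cons.prems(1) by (rule finite_subset)
      show "card W < 2 ^ d" using card_mono[OF Cons.prems(1) \<open>W \<subseteq> V\<close>] Cons.prems(2) by linarith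
    qed (use that in auto)
  qed (use Cons.prems ab in auto)
  then show ?case using ab by (simp add: Let_def)
qed

lemma colour_bound_le:
  assumes "1 \<le> s"
  shows "colour_bound k s d \<le> (s * (d + 1)) ^ (2 ^ (k + 1) - 1)"
proof (induction k)
  case 0
  then show ?case by simp
next
  case (Suc k)
  define x where "x = s * (d + 1)"
  define K where "K = colour_bound k s d"
  have "d + 1 \<le> x" using assms unfolding x_def by (metis mult_1 mult_le_mono1)
  have "K + d * K * K \<le> (d + 1) * K * K" by (simp add: algebra_simps le_square)
  also have "\<dots> \<le> x * x ^ (2 ^ (k + 1) - 1) * x ^ (2 ^ (k + 1) - 1)"
    using Suc.IH \<open>d + 1 \<le> x\<close> unfolding x_def K_def by (intro mult_mono) auto
  also have "\<dots> = x ^ (1 + (2 ^ (k + 1) - 1) + (2 ^ (k + 1) - 1))"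
    by (simp only: power_add power_one_right)
  also have "1 + (2 ^ (k + 1) - 1) + (2 ^ (k + 1) - 1) = 2 ^ (Suc k + 1) - (1::nat)"
    using one_le_power[of "2::nat" "k + 1"] by simp
  finally show ?case unfolding x_def K_def by (simp add: Let_def)
qed

lemma exists_power_two_ln_bound:
  assumes "2 \<le> n"
  shows "\<exists>d. n < 2 ^ d \<and> real (d + 1) \<le> 3 / ln 2 * ln (real n)"
proof -
  obtain d where d: "2 ^ d \<le> n" "n < 2 ^ (d + 1)"
    using ex_power_ivl1[of 2 n] assms by auto
  have "real d \<le> log 2 n"
    using d(1) le_log_of_power[of 2 d "real n"] by simp
  moreover have "1 \<le> log 2 n" using assms by simp
  ultimately have "real (d + 2) \<le> 3 * log 2 n" by simp
  then show ?thesis using d(2) by (intro exI[of _ "d + 1"]) (simp add: log_def)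
qed

lemma chromatic_number_le: "colourable E V k \<Longrightarrow> chromatic_number E V \<le> k"
  unfolding chromatic_number_def colourable_def by (rule Least_le)

lemma qc_adj_eq_comparability:
  assumes "set xs = UNIV"
  shows "qc_adj =
    comparability (coord_prec (\<lambda>_ _. True) (map (\<lambda>i. (\<lambda>u. fst u $ i, \<lambda>u. snd u $ i)) xs))"
  using assms unfolding fun_eq_iff comparability_def coord_prec_def qc_adj_def vprec_def by auto


lemma chromatic_number_qc_adj_le:
  fixes V :: "((real^'t) \<times> (real^'t)) set"
  assumes "finite V" "card V < 2 ^ d" "1 \<le> s"
    and "\<not> (\<exists>K\<subseteq>V. card K = s \<and> is_clique qc_adj K)"
  shows "chromatic_number qc_adj V \<le> (s * (d + 1)) ^ (2 ^ (CARD('t) + 1) - 1)"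
proof -
  obtain xs :: "'t list" where xs: "set xs = UNIV" "distinct xs"
    using finite_distinct_list[OF finite_class.finite_UNIV] by blast
  let ?fs = "map (\<lambda>i. (\<lambda>u :: (real^'t) \<times> (real^'t). fst u $ i,
                          \<lambda>u :: (real^'t) \<times> (real^'t). snd u $ i)) xs"
  have "colourable (comparability (coord_prec (\<lambda>_ _. True) ?fs)) V (colour_bound (length ?fs) s d)"
  proof (rule colourable_coord_prec)
    show "full_or_strict_order_on V (\<lambda>_ _. True)" by (simp add: full_or_strict_order_on_def)
    show "clique_free (comparability (coord_prec (\<lambda>_ _. True) ?fs)) V s"
      using assms(4) qc_adj_eq_comparability[OF xs(1)] by (simp add: clique_free_def)
  qed (use assms in auto)
  moreover have "length ?fs = CARD('t)" using distinct_card[OF xs(2)] xs(1) by simp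
  ultimately have "colourable qc_adj V (colour_bound CARD('t) s d)"
    using qc_adj_eq_comparability[OF xs(1)] by simp
  then show ?thesis using colour_bound_le[OF assms(3)] chromatic_number_le le_trans by blast
qed

theorem theorem3p1:
  "\<exists>\<alpha> \<beta> \<gamma> :: real. \<alpha> > 0 \<and> \<beta> > 0 \<and> \<gamma> > 0 \<and>
     (\<forall>(V :: ((real^'t) \<times> (real^'t)) set) (s :: nat).
        finite V \<and> s \<ge> 1 \<and> card V \<ge> 2 \<and>
        \<not> (\<exists>K\<subseteq>V. card K = s \<and> is_clique qc_adj K) \<longrightarrow>
        real (chromatic_number qc_adj V) \<le> \<alpha> * real s powr \<beta> * ln (real (card V)) powr \<gamma>)"
proof (intro exI conjI allI impI)
  define c :: real where "c = 3 / ln 2"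
  define e :: nat where "e = 2 ^ (CARD('t) + 1) - 1"
  have "e > 0" unfolding e_def using one_less_power[of "2::nat" "CARD('t) + 1"] by simp
  show "c ^ e > 0" "real e > 0" "real e > 0" using \<open>e > 0\<close> by (simp_all add: c_def)
  fix V :: "((real^'t) \<times> (real^'t)) set" and s :: nat
  assume V: "finite V \<and> s \<ge> 1 \<and> card V \<ge> 2 \<and> \<not> (\<exists>K\<subseteq>V. card K = s \<and> is_clique qc_adj K)"
  obtain d where d: "card V < 2 ^ d" "real (d + 1) \<le> c * ln (card V)"
    using exists_power_two_ln_bound V unfolding c_def by blast
  have "chromatic_number qc_adj V \<le> (s * (d + 1)) ^ e"
    using chromatic_number_qc_adj_le[of V d s] V d(1) unfolding e_def by blast
  then have "real (chromatic_number qc_adj V) \<le> (real s * real (d + 1)) ^ e"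
    by (metis of_nat_le_iff of_nat_mult of_nat_power)
  also have "\<dots> \<le> (real s * (c * ln (card V))) ^ e"
    using d(2) by (intro power_mono mult_left_mono) auto
  also have "\<dots> = c ^ e * real s powr real e * ln (card V) powr real e"
    using V by (simp add: powr_realpow power_mult_distrib mult_ac)
  finally show "real (chromatic_number qc_adj V) \<le>
      c ^ e * real s powr real e * ln (card V) powr real e" .
qed

end
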